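(* Let $u\in\{\mathrm{fail},\mathrm{succ}\}$, and let $F\subseteq H_u$ and $G\subseteq N$ with $F\subseteq G$. Let $G_{|F|}$ be the set of the $|F|$ tests of $G$ with the smallest values of $\sigma_u^{-1}$ (i.e., appearing earliest in the order $\sigma_u$). Then $$\sum_{j\in G_{|F|}}c_j\le 2\sum_{j\in F}c_j.$$
   Context: Tests $N=\{1,\dots,n\}$ have costs $c_j\ge0$ and probabilities $p_j\in(0,1)$. $\sigma_{\mathrm{fail}},\sigma_{\mathrm{succ}}$ are permutations of $N$ (ties broken arbitrarily) with $c_{\sigma_{\mathrm{fail}}(1)}/(1-p_{\sigma_{\mathrm{fail}}(1)})\le\dots\le c_{\sigma_{\mathrm{fail}}(n)}/(1-p_{\sigma_{\mathrm{fail}}(n)})$ and $c_{\sigma_{\mathrm{succ}}(1)}/p_{\sigma_{\mathrm{succ}}(1)}\le\dots\le c_{\sigma_{\mathrm{succ}}(n)}/p_{\sigma_{\mathrm{succ}}(n)}$. $H_{\mathrm{fail}}=\{j\in N:p_j<\tfrac12\}$ and $H_{\mathrm{succ}}=\{j\in N:p_j\ge\tfrac12\}$. *)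

theory Defs
  imports Complex_Main
begin

datatype outcome = Fail | Succ

fun ratio :: "outcome \<Rightarrow> (nat \<Rightarrow> real) \<Rightarrow> (nat \<Rightarrow> real) \<Rightarrow> nat \<Rightarrow> real" where
  "ratio Fail c p j = c j / (1 - p j)"
| "ratio Succ c p j = c j / p j"

fun H :: "outcome \<Rightarrow> nat \<Rightarrow> (nat \<Rightarrow> real) \<Rightarrow> nat set" where
  "H Fail n p = {j \<in> {1..n}. p j < 1/2}"
| "H Succ n p = {j \<in> {1..n}. p j \<ge> 1/2}"

definition sorted_perm :: "outcome \<Rightarrow> nat \<Rightarrow> (nat \<Rightarrow> real) \<Rightarrow> (nat \<Rightarrow> real) \<Rightarrow> (nat \<Rightarrow> nat) \<Rightarrow> bool" where
  "sorted_perm u n c p \<sigma> \<longleftrightarrow> bij_betw \<sigma> {1..n} {1..n} \<and>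
     (\<forall>i\<in>{1..n}. \<forall>j\<in>{1..n}. i \<le> j \<longrightarrow> ratio u c p (\<sigma> i) \<le> ratio u c p (\<sigma> j))"

definition first_k :: "(nat \<Rightarrow> nat) \<Rightarrow> nat \<Rightarrow> nat set \<Rightarrow> nat \<Rightarrow> nat set" where
  "first_k \<sigma> n G k = {j \<in> G. card {i \<in> G. inv_into {1..n} \<sigma> i < inv_into {1..n} \<sigma> j} < k}"

end

theory Submission
  imports Defs
begin

text \<open>Write \<open>r\<close> for the sorting ratio. On every test \<open>c \<le> r\<close>, and on a test of \<open>H u\<close>
  the denominator of the ratio is at least \<open>1/2\<close>, so \<open>r \<le> 2 c\<close> there. The first \<open>|F|\<close> tests
  of \<open>G\<close> in the order \<open>\<sigma>\<^sub>u\<close> are at most \<open>|F|\<close> many, and each of them outside \<open>F\<close> precedes,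
  hence has ratio at most that of, each test of \<open>F\<close> not among them. Exchanging them shows
  that their total ratio is at most that of \<open>F\<close>, and the two estimates give the claim.\<close>

lemma ratio_nonneg:
  assumes "0 \<le> c j" "0 < p j" "p j < 1"
  shows "0 \<le> ratio u c p j"
  using assms by (cases u) auto

lemma cost_le_ratio:
  assumes "0 \<le> c j" "0 < p j" "p j < 1"
  shows "c j \<le> ratio u c p j"
proof (cases u)
  case Fail
  have "c j * (1 - p j) \<le> c j"
    using assms by (simp add: mult_left_le)
  then show ?thesis
    using Fail assms by (simp add: le_divide_eq)
next
  case Succ
  have "c j * p j \<le> c j"
    using assms by (simp add: mult_left_le)
  then show ?thesis
    using Succ assms by (simp add: le_divide_eq)
qed

lemma ratio_le_twice_cost:
  assumes "0 \<le> c j" "0 < p j" "p j < 1" "j \<in> H u n p"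
  shows "ratio u c p j \<le> 2 * c j"
proof (cases u)
  case Fail
  then have "1 \<le> 2 * (1 - p j)"
    using assms(4) by simp
  then have "c j \<le> 2 * c j * (1 - p j)"
    using assms(1) mult_left_mono[of 1 "2 * (1 - p j)" "c j"] by (simp add: algebra_simps)
  then show ?thesis
    using Fail assms(3) by (simp add: divide_le_eq)
next
  case Succ
  then have "1 \<le> 2 * p j"
    using assms(4) by simp
  then have "c j \<le> 2 * c j * p j"
    using assms(1) mult_left_mono[of 1 "2 * p j" "c j"] by (simp add: mult.assoc)
  then show ?thesis
    using Succ assms(2) by (simp add: divide_le_eq)
qed

lemma sorted_perm_inj_on_rank:
  assumes "sorted_perm u n c p \<sigma>"
  shows "inj_on (inv_into {1..n} \<sigma>) {1..n}"
  using assms bij_betw_inv_into bij_betw_imp_inj_on unfolding sorted_perm_def by blast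

lemma sorted_perm_ratio_mono:
  assumes "sorted_perm u n c p \<sigma>" "x \<in> {1..n}" "y \<in> {1..n}"
    and "inv_into {1..n} \<sigma> x < inv_into {1..n} \<sigma> y"
  shows "ratio u c p x \<le> ratio u c p y"
proof -
  have bij: "bij_betw \<sigma> {1..n} {1..n}"
    using assms(1) unfolding sorted_perm_def by blast
  then have "inv_into {1..n} \<sigma> x \<in> {1..n}" "inv_into {1..n} \<sigma> y \<in> {1..n}"
    using assms(2,3) by (meson bij_betw_inv_into bij_betwE)+
  moreover have "\<sigma> (inv_into {1..n} \<sigma> x) = x" "\<sigma> (inv_into {1..n} \<sigma> y) = y"
    using bij assms(2,3) by (auto intro: f_inv_into_f simp: bij_betw_def)
  ultimately show ?thesis
    using assms(1,4) unfolding sorted_perm_def by (metis less_imp_le)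
qed

lemma card_first_k_le:
  assumes "finite G" "inj_on (inv_into {1..n} \<sigma>) G"
  shows "card (first_k \<sigma> n G k) \<le> k"
proof -
  define rk where "rk = inv_into {1..n} \<sigma>"
  define pos where "pos j = card {i \<in> G. rk i < rk j}" for j
  have pos_strict_mono: "pos x < pos y" if "x \<in> G" "rk x < rk y" for x y
    unfolding pos_def using assms(1) that by (intro psubset_card_mono) auto
  have "inj_on pos G"
  proof (rule inj_onI)
    fix x y assume xy: "x \<in> G" "y \<in> G" "pos x = pos y"
    then have "\<not> rk x < rk y" "\<not> rk y < rk x"
      using pos_strict_mono by (metis less_irrefl)+
    then have "rk x = rk y"
      by simp
    then show "x = y"
      using assms(2) xy(1,2) unfolding rk_def inj_on_def by blast
  qed
  then have "inj_on pos (first_k \<sigma> n G k)"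
    unfolding first_k_def by (rule inj_on_subset) auto
  moreover have "pos ` first_k \<sigma> n G k \<subseteq> {..<k}"
    unfolding first_k_def pos_def rk_def by auto
  ultimately have "card (first_k \<sigma> n G k) \<le> card {..<k}"
    by (intro card_inj_on_le) auto
  then show ?thesis
    by simp
qed

lemma first_k_precedes:
  assumes "finite G" "x \<in> first_k \<sigma> n G k" "y \<in> G - first_k \<sigma> n G k"
  shows "inv_into {1..n} \<sigma> x < inv_into {1..n} \<sigma> y"
proof (rule ccontr)
  assume "\<not> ?thesis"
  then have "{i \<in> G. inv_into {1..n} \<sigma> i < inv_into {1..n} \<sigma> y}
      \<subseteq> {i \<in> G. inv_into {1..n} \<sigma> i < inv_into {1..n} \<sigma> x}"
    by auto
  then have "card {i \<in> G. inv_into {1..n} \<sigma> i < inv_into {1..n} \<sigma> y}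
      \<le> card {i \<in> G. inv_into {1..n} \<sigma> i < inv_into {1..n} \<sigma> x}"
    using assms(1) by (intro card_mono) auto
  then show False
    using assms(2,3) unfolding first_k_def by auto
qed

lemma sum_le_sum_if_dominated:
  fixes r :: "'a \<Rightarrow> real"
  assumes "finite A" "finite B" "card A \<le> card B"
    and le: "\<forall>a\<in>A. \<forall>b\<in>B. r a \<le> r b" and nonneg: "\<forall>b\<in>B. 0 \<le> r b"
  shows "sum r A \<le> sum r B"
proof (cases "B = {}")
  case True
  then show ?thesis
    using assms(1,3) by simp
next
  case False
  define m where "m = Min (r ` B)"
  obtain b where b: "b \<in> B" "m = r b"
  proof -
    have "m \<in> r ` B"
      unfolding m_def using assms(2) False by simp
    then show ?thesis
      using that by blast
  qed
  have "sum r A \<le> of_nat (card A) * m"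
    using sum_bounded_above[of A r m] le b by simp
  also have "\<dots> \<le> of_nat (card B) * m"
    using assms(3) nonneg b by (simp add: mult_right_mono)
  also have "\<dots> \<le> sum r B"
    using sum_bounded_below[of B m r] assms(2) unfolding m_def by simp
  finally show ?thesis .
qed

lemma sum_le_sum_by_exchange:
  fixes r :: "'a \<Rightarrow> real"
  assumes "finite K" "finite F" "card K \<le> card F"
    and "\<forall>a\<in>K - F. \<forall>b\<in>F - K. r a \<le> r b" and "\<forall>b\<in>F. 0 \<le> r b"
  shows "sum r K \<le> sum r F"
proof -
  have "card (K - F) \<le> card (F - K)"
    using assms(1-3) card_Int_Diff[of K F] card_Int_Diff[of F K] by (simp add: Int_commute)
  then have "sum r (K - F) \<le> sum r (F - K)"
    using assms by (intro sum_le_sum_if_dominated) auto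
  then show ?thesis
    using assms(1,2) sum.Int_Diff[of K r F] sum.Int_Diff[of F r K] by (simp add: Int_commute)
qed

theorem lemma4:
  fixes n :: nat and c p :: "nat \<Rightarrow> real" and \<sigma> :: "nat \<Rightarrow> nat"
    and u :: outcome and F G :: "nat set"
  assumes c_nonneg: "\<forall>j\<in>{1..n}. c j \<ge> 0"
    and p_range: "\<forall>j\<in>{1..n}. 0 < p j \<and> p j < 1"
    and sigma: "sorted_perm u n c p \<sigma>"
    and F_H: "F \<subseteq> H u n p"
    and G_N: "G \<subseteq> {1..n}"
    and F_G: "F \<subseteq> G"
  shows "(\<Sum>j\<in>first_k \<sigma> n G (card F). c j) \<le> 2 * (\<Sum>j\<in>F. c j)"
proof -
  define K where "K = first_k \<sigma> n G (card F)"
  have fin: "finite G" "finite F"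
    using G_N F_G by (auto intro: finite_subset)
  have K_G: "K \<subseteq> G"
    unfolding K_def first_k_def by auto
  have "card K \<le> card F"
    unfolding K_def using fin sorted_perm_inj_on_rank[OF sigma] G_N
    by (intro card_first_k_le) (auto intro: inj_on_subset)
  moreover have "\<forall>a\<in>K - F. \<forall>b\<in>F - K. ratio u c p a \<le> ratio u c p b"
    using first_k_precedes[OF fin(1)] sorted_perm_ratio_mono[OF sigma] K_G G_N F_G
    unfolding K_def by blast
  ultimately have "sum (ratio u c p) K \<le> sum (ratio u c p) F"
    using K_G F_G G_N fin c_nonneg p_range
    by (intro sum_le_sum_by_exchange ballI ratio_nonneg) (auto intro: finite_subset)
  moreover have "sum c K \<le> sum (ratio u c p) K"
    using K_G G_N c_nonneg p_range by (intro sum_mono cost_le_ratio) auto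
  moreover have "sum (ratio u c p) F \<le> sum (\<lambda>j. 2 * c j) F"
    using F_H F_G G_N c_nonneg p_range by (intro sum_mono ratio_le_twice_cost) auto
  ultimately show ?thesis
    unfolding K_def by (simp add: sum_distrib_left)
qed

end
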